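(* Let $\Omega\subset\mathbb{R}^n$ be open, let $(\alpha_i)$ be a sequence of regular monotone set functions on $\Omega$ weakly converging to a regular monotone set function $\alpha$, and let $K_j$ be a decreasing sequence of compact subsets of $\Omega$ with $K:=\bigcap_jK_j$ such that $\alpha(K)=0$. Then $$\lim_{j\to\infty}\limsup_{i\to\infty}\alpha_i(K_j)=0.$$
   Context: A set function $\alpha:\mathcal{P}(\Omega)\to[0,\infty]$ (defined on all subsets of $\Omega$) is monotone if $\alpha(E)\le\alpha(F)$ whenever $E\subset F$. A monotone $\alpha$ is regular if $\alpha(A)=\sup\{\alpha(K):K\subset A,\ K\text{ compact}\}$ for every open $A\subset\Omega$, and $\alpha(E)=\inf\{\alpha(A):E\subset A\subset\Omega,\ A\text{ open}\}$ for every $E\subset\Omega$. A sequence of regular monotone set functions $\alpha_i$ weakly converges to a monotone set function $\alpha$ if $\liminf_i\alpha_i(A)\ge\alpha(A)$ for every open $A\subset\Omega$ and $\limsup_i\alpha_i(K)\le\alpha(K)$ for every compact $K\subset\Omega$. *)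

theory Defs
  imports "HOL-Analysis.Analysis" "HOL-Library.Extended_Nonnegative_Real"
begin

text \<open>Set functions on subsets of an open set \<Omega>, with values in [0,\<infinity>] (ennreal).
  Only the values on subsets of \<Omega> are relevant.\<close>

definition monotone_sf :: "'a::euclidean_space set \<Rightarrow> ('a set \<Rightarrow> ennreal) \<Rightarrow> bool" where
  "monotone_sf \<Omega> \<alpha> \<longleftrightarrow> (\<forall>E F. E \<subseteq> F \<and> F \<subseteq> \<Omega> \<longrightarrow> \<alpha> E \<le> \<alpha> F)"

definition regular_sf :: "'a::euclidean_space set \<Rightarrow> ('a set \<Rightarrow> ennreal) \<Rightarrow> bool" where
  "regular_sf \<Omega> \<alpha> \<longleftrightarrow> monotone_sf \<Omega> \<alpha> \<and>
     (\<forall>A. open A \<and> A \<subseteq> \<Omega> \<longrightarrow> \<alpha> A = (SUP K\<in>{K. compact K \<and> K \<subseteq> A}. \<alpha> K)) \<and>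
     (\<forall>E. E \<subseteq> \<Omega> \<longrightarrow> \<alpha> E = (INF A\<in>{A. open A \<and> E \<subseteq> A \<and> A \<subseteq> \<Omega>}. \<alpha> A))"

definition weak_conv_sf :: "'a::euclidean_space set \<Rightarrow> (nat \<Rightarrow> 'a set \<Rightarrow> ennreal) \<Rightarrow> ('a set \<Rightarrow> ennreal) \<Rightarrow> bool" where
  "weak_conv_sf \<Omega> \<alpha>s \<alpha> \<longleftrightarrow>
     (\<forall>A. open A \<and> A \<subseteq> \<Omega> \<longrightarrow> liminf (\<lambda>i. \<alpha>s i A) \<ge> \<alpha> A) \<and>
     (\<forall>K. compact K \<and> K \<subseteq> \<Omega> \<longrightarrow> limsup (\<lambda>i. \<alpha>s i K) \<le> \<alpha> K)"

end

theory Submission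
  imports Defs
begin

text \<open>Outer regularity of \<alpha> at K = \<Inter>j. K_j, where \<alpha> K = 0, gives an open A \<supseteq> K with
  \<alpha> A < a; by compactness every K_j with j large lies in A. For those j, the compact half of
  weak convergence and monotonicity of \<alpha> give limsup_i \<alpha>_i K_j \<le> \<alpha> K_j \<le> \<alpha> A < a.\<close>

lemma decreasing_compact_eventually_subset_open:
  fixes Ks :: "nat \<Rightarrow> 'a::heine_borel set"
  assumes compact: "\<And>j. compact (Ks j)" and decreasing: "\<And>j. Ks (Suc j) \<subseteq> Ks j"
    and "open A" and "(\<Inter>j. Ks j) \<subseteq> A"
  shows "\<forall>\<^sub>F j in sequentially. Ks j \<subseteq> A"
proof -
  have antimono: "Ks n \<subseteq> Ks m" if "m \<le> n" for m n
    using lift_Suc_antimono_le[of Ks, OF decreasing that] .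
  obtain j where "Ks j \<subseteq> A"
  proof (rule ccontr)
    assume "\<not> thesis"
    have "\<And>j. compact (Ks j - A)"
      using compact \<open>open A\<close> by (simp add: compact_diff)
    moreover have "\<And>j. Ks j - A \<noteq> {}"
      using that \<open>\<not> thesis\<close> by blast
    moreover have "\<And>m n. m \<le> n \<Longrightarrow> Ks n - A \<subseteq> Ks m - A"
      using antimono by blast
    ultimately have "\<Inter>(range (\<lambda>j. Ks j - A)) \<noteq> {}"
      by (rule compact_nest)
    then show False
      using \<open>(\<Inter>j. Ks j) \<subseteq> A\<close> by blast
  qed
  then show ?thesis
    using antimono unfolding eventually_sequentially by blast
qed

lemma regular_sf_null_imp_small_open:
  assumes "regular_sf \<Omega> \<alpha>" and "E \<subseteq> \<Omega>" and "\<alpha> E = 0" and "0 < a"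
  obtains A where "open A" "E \<subseteq> A" "A \<subseteq> \<Omega>" "\<alpha> A < a"
proof -
  have "(INF A\<in>{A. open A \<and> E \<subseteq> A \<and> A \<subseteq> \<Omega>}. \<alpha> A) < a"
    using assms unfolding regular_sf_def by metis
  then obtain A where "open A \<and> E \<subseteq> A \<and> A \<subseteq> \<Omega>" "\<alpha> A < a"
    by (auto simp: INF_less_iff)
  then show ?thesis
    using that by blast
qed

lemma weak_conv_sf_limsup_le_open:
  assumes "weak_conv_sf \<Omega> \<alpha>s \<alpha>" and "monotone_sf \<Omega> \<alpha>"
    and "compact K" and "K \<subseteq> A" and "A \<subseteq> \<Omega>"
  shows "limsup (\<lambda>i. \<alpha>s i K) \<le> \<alpha> A"
proof -
  have "limsup (\<lambda>i. \<alpha>s i K) \<le> \<alpha> K"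
    using assms unfolding weak_conv_sf_def by blast
  also have "\<dots> \<le> \<alpha> A"
    using assms unfolding monotone_sf_def by blast
  finally show ?thesis .
qed

theorem proposition22:
  fixes \<Omega> :: "'a::euclidean_space set"
    and \<alpha>s :: "nat \<Rightarrow> 'a set \<Rightarrow> ennreal" and \<alpha> :: "'a set \<Rightarrow> ennreal"
    and Ks :: "nat \<Rightarrow> 'a set"
  assumes "open \<Omega>"
    and "\<And>i. regular_sf \<Omega> (\<alpha>s i)"
    and "regular_sf \<Omega> \<alpha>"
    and "weak_conv_sf \<Omega> \<alpha>s \<alpha>"
    and "\<And>j. compact (Ks j)" and "\<And>j. Ks j \<subseteq> \<Omega>"
    and "\<And>j. Ks (Suc j) \<subseteq> Ks j"
    and "\<alpha> (\<Inter>j. Ks j) = 0"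
  shows "(\<lambda>j. limsup (\<lambda>i. \<alpha>s i (Ks j))) \<longlonglongrightarrow> 0"
proof (rule order_tendstoI)
  fix a :: ennreal
  assume "a < 0"
  then show "\<forall>\<^sub>F j in sequentially. a < limsup (\<lambda>i. \<alpha>s i (Ks j))"
    by simp
next
  fix a :: ennreal
  assume "0 < a"
  moreover have "(\<Inter>j. Ks j) \<subseteq> \<Omega>"
    using assms(6) by blast
  ultimately obtain A where A: "open A" "(\<Inter>j. Ks j) \<subseteq> A" "A \<subseteq> \<Omega>" "\<alpha> A < a"
    using regular_sf_null_imp_small_open[OF assms(3) _ assms(8)] by blast
  have "monotone_sf \<Omega> \<alpha>"
    using assms(3) unfolding regular_sf_def by blast
  with A have "limsup (\<lambda>i. \<alpha>s i (Ks j)) < a" if "Ks j \<subseteq> A" for j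
    using weak_conv_sf_limsup_le_open[OF assms(4) _ assms(5) that] by (meson le_less_trans)
  then show "\<forall>\<^sub>F j in sequentially. limsup (\<lambda>i. \<alpha>s i (Ks j)) < a"
    by (rule eventually_mono[OF decreasing_compact_eventually_subset_open[OF assms(5,7) A(1,2)]])
qed

end
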